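(* Consider the setting in the context, and let $p$ and $V(x_0,s_0,\lambda)$ be the asking reservation price and value function of $\lambda$ units of the non-traded stock. Let $\bar w=W\left(s_0e^{(\delta-\frac{\eta^2}{2})T}\eta^2T\lambda\gamma(1-\rho^2)\right)$. Then $p=D+A$, where $$D=\frac{e^{-rT}}{\gamma(1-\rho^2)}\left(\frac{\bar w}{\eta^2T}+\frac{\bar w^2}{2\eta^2T}\right),\qquad A=-\frac{e^{-rT}}{\gamma(1-\rho^2)}\ln\mathbb E\left(\exp\left(-\frac{\bar w}{\eta^2T}\left(e^{\eta\sqrt TN}-1-\eta\sqrt TN\right)\right)\right).$$ Moreover $V(x_0,s_0,\lambda)=V_D(x_0,s_0,\lambda)V_A(s_0,\lambda)$, where $$V_D(x_0,s_0,\lambda)=-\frac1\gamma\exp\left(-\gamma e^{rT}(x_0+D)-\frac{(\mu-r)^2}{2\sigma^2}T\right),\qquad V_A(s_0,\lambda)=\exp\left(-\gamma e^{rT}A\right).$$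
   Context: Fix $T>0$, $r\in\mathbb R$, $\nu,\mu\in\mathbb R$, $\eta>0$, $\sigma>0$, $\rho\in(-1,1)$, $s_0>0$, $\lambda>0$, $\gamma>0$, $x_0\in\mathbb R$; $N$ is a standard Gaussian random variable; $\delta=\nu-\eta\rho\frac{\mu-r}{\sigma}$. (Model: non-traded asset $dS_t=S_t(\nu dt+\eta dZ_t)$, traded asset $dP_t=P_t(\mu dt+\sigma dB_t)$, correlation $\rho$, bond rate $r$, exponential utility $-\frac1\gamma e^{-\gamma x}$.) The reservation price and value function are $$p=-\frac{e^{-rT}}{\gamma(1-\rho^2)}\ln\mathbb E\exp\left(-\lambda\gamma(1-\rho^2)s_0e^{(\delta-\frac{\eta^2}{2})T}e^{\eta\sqrt TN}\right),$$ $$V(x_0,s_0,\lambda)=-\frac1\gamma e^{-\gamma x_0e^{rT}-\frac{(\mu-r)^2}{2\sigma^2}T}\left(\mathbb E\exp\left(-\lambda\gamma(1-\rho^2)s_0e^{(\delta-\frac{\eta^2}{2})T}e^{\eta\sqrt TN}\right)\right)^{\frac1{1-\rho^2}}.$$ $W$ is the Lambert function, the inverse of $x\in(-1,\infty)\mapsto xe^x\in(-1/e,\infty)$. *)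

theory Defs
  imports "HOL-Probability.Probability"
begin

definition lambert_W :: "real \<Rightarrow> real" where
  "lambert_W y = (THE w. w > -1 \<and> w * exp w = y)"

definition delta_par :: "real \<Rightarrow> real \<Rightarrow> real \<Rightarrow> real \<Rightarrow> real \<Rightarrow> real \<Rightarrow> real" where
  "delta_par \<nu> \<eta> \<rho> \<mu> r \<sigma> = \<nu> - \<eta> * \<rho> * (\<mu> - r) / \<sigma>"

text \<open>The expectation appearing in the reservation price and value function;
  N is a standard Gaussian random variable on the probability space M.\<close>
definition res_expect ::
  "'w measure \<Rightarrow> ('w \<Rightarrow> real) \<Rightarrow> real \<Rightarrow> real \<Rightarrow> real \<Rightarrow> real \<Rightarrow> real \<Rightarrow> real \<Rightarrow> real \<Rightarrow> real" where
  "res_expect M N T \<delta> \<eta> \<rho> s0 lam \<gamma> =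
     (\<integral>\<omega>. exp (- lam * \<gamma> * (1 - \<rho>\<^sup>2) * s0 * exp ((\<delta> - \<eta>\<^sup>2 / 2) * T) * exp (\<eta> * sqrt T * N \<omega>)) \<partial>M)"

definition reservation_price ::
  "'w measure \<Rightarrow> ('w \<Rightarrow> real) \<Rightarrow> real \<Rightarrow> real \<Rightarrow> real \<Rightarrow> real \<Rightarrow> real \<Rightarrow> real \<Rightarrow> real \<Rightarrow> real \<Rightarrow> real" where
  "reservation_price M N T r \<delta> \<eta> \<rho> s0 lam \<gamma> =
     - exp (- r * T) / (\<gamma> * (1 - \<rho>\<^sup>2)) * ln (res_expect M N T \<delta> \<eta> \<rho> s0 lam \<gamma>)"

definition value_fn ::
  "'w measure \<Rightarrow> ('w \<Rightarrow> real) \<Rightarrow> real \<Rightarrow> real \<Rightarrow> real \<Rightarrow> real \<Rightarrow> real \<Rightarrow> real \<Rightarrow> real \<Rightarrow> real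
     \<Rightarrow> real \<Rightarrow> real \<Rightarrow> real \<Rightarrow> real" where
  "value_fn M N T r \<mu> \<sigma> \<delta> \<eta> \<rho> \<gamma> x0 s0 lam =
     - (1 / \<gamma>) * exp (- \<gamma> * x0 * exp (r * T) - (\<mu> - r)\<^sup>2 / (2 * \<sigma>\<^sup>2) * T)
       * (res_expect M N T \<delta> \<eta> \<rho> s0 lam \<gamma>) powr (1 / (1 - \<rho>\<^sup>2))"

end

theory Submission
  imports Defs
begin

text \<open>Write \<open>a = \<eta> sqrt T\<close> and \<open>c = \<lambda>\<gamma>(1-\<rho>\<^sup>2) s\<^sub>0 e\<^bsup>(\<delta>-\<eta>\<^sup>2/2)T\<^esup>\<close>, so that the expectation in \<open>p\<close>
  and \<open>V\<close> is \<open>E exp(-c e\<^bsup>aN\<^esup>)\<close>. Shifting the Gaussian law by \<open>t\<close> (Cameron-Martin) turns it into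
  \<open>e\<^bsup>-t\<^sup>2/2\<^esup> E[e\<^bsup>tN\<^esup> exp(-c e\<^bsup>-at\<^esup> e\<^bsup>aN\<^esup>)]\<close>. Choosing \<open>t = w/a\<close> with \<open>w e\<^bsup>w\<^esup> = c a\<^sup>2\<close>, i.e.
  \<open>w = W(c a\<^sup>2)\<close>, makes \<open>c e\<^bsup>-at\<^esup> = w/a\<^sup>2\<close>, and completing the exponent to
  \<open>e\<^bsup>aN\<^esup> - 1 - aN\<close> leaves the constant factor \<open>exp(-(w/a\<^sup>2 + w\<^sup>2/(2a\<^sup>2)))\<close>. Taking logarithms
  gives \<open>p = D + A\<close>; raising to the power \<open>1/(1-\<rho>\<^sup>2)\<close> gives \<open>V = V\<^sub>D V\<^sub>A\<close>.\<close>

lemma mult_exp_strict_mono: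
  fixes u v :: real
  assumes "-1 < u" "u < v"
  shows "u * exp u < v * exp v"
proof -
  have "\<exists>y. DERIV (\<lambda>w. w * exp w) x :> y \<and> 0 < y" if "u \<le> x" for x
  proof -
    have "DERIV (\<lambda>w. w * exp w) x :> (1 + x) * exp x"
      by (auto intro!: derivative_eq_intros simp: algebra_simps)
    moreover have "0 < (1 + x) * exp x"
      using that assms by simp
    ultimately show ?thesis by blast
  qed
  then show ?thesis
    using DERIV_pos_imp_increasing[OF assms(2), of "\<lambda>w. w * exp w"] by simp
qed

lemma lambert_W_eqI:
  assumes "-1 < w" "w * exp w = y"
  shows "lambert_W y = w"
  unfolding lambert_W_def
proof (rule the_equality)
  show "-1 < w \<and> w * exp w = y" using assms by simp
  show "v = w" if "-1 < v \<and> v * exp v = y" for v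
    using that assms mult_exp_strict_mono[of v w] mult_exp_strict_mono[of w v]
    by (cases v w rule: linorder_cases) auto
qed

lemma lambert_W_times_exp:
  assumes "0 < y"
  shows "lambert_W y * exp (lambert_W y) = y"
proof -
  have "\<exists>w. 0 \<le> w \<and> w \<le> y \<and> w * exp w = y"
    using assms by (intro IVT) (auto intro!: continuous_intros)
  then obtain w where "0 \<le> w" "w * exp w = y" by blast
  then show ?thesis using lambert_W_eqI[of w y] by simp
qed

lemma lambert_W_pos:
  assumes "0 < y"
  shows "0 < lambert_W y"
  using lambert_W_times_exp[OF assms] assms by (metis exp_gt_zero zero_less_mult_pos2)

lemma std_normal_density_shift:
  "std_normal_density (x - t) = exp (t * x - t\<^sup>2 / 2) * std_normal_density x"
  unfolding std_normal_density_def
  by (simp add: mult.left_commute power2_diff flip: exp_add)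

lemma std_normal_shift_integral:
  assumes N: "distributed M lborel N std_normal_density" and g[measurable]: "g \<in> borel_measurable borel"
  shows "(\<integral>\<omega>. g (N \<omega>) \<partial>M) = exp (- t\<^sup>2 / 2) * (\<integral>\<omega>. exp (t * N \<omega>) * g (N \<omega> - t) \<partial>M)"
proof -
  have "(\<integral>\<omega>. g (N \<omega>) \<partial>M) = (\<integral>x. std_normal_density x * g x \<partial>lborel)"
    by (rule distributed_integral[OF N, symmetric]) auto
  also have "\<dots> = (\<integral>x. std_normal_density (- t + 1 * x) * g (- t + 1 * x) \<partial>lborel)"
    using lborel_integral_real_affine[of 1 "\<lambda>x. std_normal_density x * g x" "- t"] by simp
  also have "\<dots> = (\<integral>x. exp (- t\<^sup>2 / 2) * (std_normal_density x * (exp (t * x) * g (x - t))) \<partial>lborel)"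
  proof -
    have "exp (t * x - t\<^sup>2 / 2) = exp (- t\<^sup>2 / 2) * exp (t * x)" for x
      by (simp flip: exp_add)
    then show ?thesis by (simp add: std_normal_density_shift mult_ac)
  qed
  also have "\<dots> = exp (- t\<^sup>2 / 2) * (\<integral>x. std_normal_density x * (exp (t * x) * g (x - t)) \<partial>lborel)"
    by simp
  also have "(\<integral>x. std_normal_density x * (exp (t * x) * g (x - t)) \<partial>lborel)
      = (\<integral>\<omega>. exp (t * N \<omega>) * g (N \<omega> - t) \<partial>M)"
    by (rule distributed_integral[OF N]) auto
  finally show ?thesis .
qed

lemma exp_neg_lognormal_integral_factor:
  assumes N: "distributed M lborel N std_normal_density" and "a \<noteq> 0" "0 < c"
    and w: "w = lambert_W (c * a\<^sup>2)"
  shows "(\<integral>\<omega>. exp (- c * exp (a * N \<omega>)) \<partial>M)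
    = exp (- (w / a\<^sup>2 + w\<^sup>2 / (2 * a\<^sup>2)))
      * (\<integral>\<omega>. exp (- w / a\<^sup>2 * (exp (a * N \<omega>) - 1 - a * N \<omega>)) \<partial>M)"
proof -
  have a2: "0 < a\<^sup>2" using \<open>a \<noteq> 0\<close> by simp
  have "w * exp w = c * a\<^sup>2"
    unfolding w using lambert_W_times_exp a2 \<open>0 < c\<close> by simp
  then have lambert_eq: "c * exp (- w) = w / a\<^sup>2"
    using a2 by (simp add: exp_minus field_simps)
  define t where "t = w / a"
  have shifted: "exp (t * x) * exp (- c * exp (a * (x - t)))
      = exp (- w / a\<^sup>2) * exp (- w / a\<^sup>2 * (exp (a * x) - 1 - a * x))" for x
  proof -
    have "a * (x - t) = - w + a * x"
      using \<open>a \<noteq> 0\<close> by (simp add: t_def right_diff_distrib)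
    then have "c * exp (a * (x - t)) = w / a\<^sup>2 * exp (a * x)"
      using lambert_eq by (metis exp_add mult.assoc)
    moreover have "t * x = w / a\<^sup>2 * (a * x)"
      using \<open>a \<noteq> 0\<close> by (simp add: t_def power2_eq_square)
    ultimately show ?thesis
      by (simp add: algebra_simps add_divide_distrib flip: exp_add)
  qed
  have "(\<integral>\<omega>. exp (- c * exp (a * N \<omega>)) \<partial>M)
      = exp (- t\<^sup>2 / 2) * (\<integral>\<omega>. exp (t * N \<omega>) * exp (- c * exp (a * (N \<omega> - t))) \<partial>M)"
    by (rule std_normal_shift_integral[OF N]) simp
  also have "\<dots> = exp (- t\<^sup>2 / 2) * exp (- w / a\<^sup>2)
      * (\<integral>\<omega>. exp (- w / a\<^sup>2 * (exp (a * N \<omega>) - 1 - a * N \<omega>)) \<partial>M)"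
    by (simp only: shifted integral_mult_right_zero mult.assoc)
  also have "exp (- t\<^sup>2 / 2) * exp (- w / a\<^sup>2) = exp (- (w / a\<^sup>2 + w\<^sup>2 / (2 * a\<^sup>2)))"
    by (simp add: t_def power_divide add_ac flip: exp_add)
  finally show ?thesis .
qed

lemma (in prob_space) integral_pos_AE:
  fixes f :: "'a \<Rightarrow> real"
  assumes "integrable M f" "AE x in M. 0 < f x"
  shows "0 < integral\<^sup>L M f"
proof -
  have "0 \<le> integral\<^sup>L M f"
    using assms(2) by (intro integral_nonneg_AE) auto
  moreover have "integral\<^sup>L M f \<noteq> 0"
  proof
    assume "integral\<^sup>L M f = 0"
    moreover have "AE x in M. 0 \<le> f x"
      using assms(2) by eventually_elim simp
    ultimately have "AE x in M. f x = 0"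
      using integral_nonneg_eq_0_iff_AE[OF assms(1)] by simp
    with assms(2) have "AE x in M. False" by eventually_elim simp
    then show False by simp
  qed
  ultimately show ?thesis by simp
qed

lemma (in prob_space) integral_exp_neg_convexity_gap_pos:
  fixes \<beta> :: real and X :: "'a \<Rightarrow> real"
  assumes "0 \<le> \<beta>" and [measurable]: "X \<in> borel_measurable M"
  shows "0 < (\<integral>\<omega>. exp (- \<beta> * (exp (X \<omega>) - 1 - X \<omega>)) \<partial>M)"
proof (rule integral_pos_AE)
  have "exp (- \<beta> * (exp x - 1 - x)) \<le> 1" for x
  proof -
    have "0 \<le> exp x - 1 - x"
      using exp_ge_add_one_self[of x] by linarith
    then show ?thesis using \<open>0 \<le> \<beta>\<close> by simp
  qed
  then show "integrable M (\<lambda>\<omega>. exp (- \<beta> * (exp (X \<omega>) - 1 - X \<omega>)))"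
    by (intro integrable_const_bound[where B = 1]) auto
qed simp

lemma reservation_price_factor:
  assumes "res_expect M N T \<delta> \<eta> \<rho> s0 lam \<gamma> = exp (- L) * E" "0 < E"
  shows "reservation_price M N T r \<delta> \<eta> \<rho> s0 lam \<gamma>
    = exp (- r * T) / (\<gamma> * (1 - \<rho>\<^sup>2)) * L + - exp (- r * T) / (\<gamma> * (1 - \<rho>\<^sup>2)) * ln E"
  using assms unfolding reservation_price_def
  by (simp add: ln_mult ring_distribs)

lemma value_fn_factor:
  fixes r :: real
  assumes "res_expect M N T \<delta> \<eta> \<rho> s0 lam \<gamma> = exp (- L) * E" "0 < E" "\<gamma> \<noteq> 0"
  defines "D \<equiv> exp (- r * T) / (\<gamma> * (1 - \<rho>\<^sup>2)) * L"
    and "A \<equiv> - exp (- r * T) / (\<gamma> * (1 - \<rho>\<^sup>2)) * ln E"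
  shows "value_fn M N T r \<mu> \<sigma> \<delta> \<eta> \<rho> \<gamma> x0 s0 lam
    = - (1 / \<gamma>) * exp (- \<gamma> * exp (r * T) * (x0 + D) - (\<mu> - r)\<^sup>2 / (2 * \<sigma>\<^sup>2) * T)
      * exp (- \<gamma> * exp (r * T) * A)"
proof -
  define k where "k = 1 - \<rho>\<^sup>2"
  have scale: "\<gamma> * exp (r * T) * (exp (- r * T) / (\<gamma> * k) * x) = x / k" for x
  proof -
    have "\<gamma> * exp (r * T) * (exp (- r * T) / (\<gamma> * k) * x)
        = \<gamma> / \<gamma> * (exp (r * T) * exp (- (r * T))) * x / k"
      by (simp add: field_simps)
    then show ?thesis using \<open>\<gamma> \<noteq> 0\<close> by (simp add: exp_minus_inverse)
  qed
  have "- \<gamma> * exp (r * T) * (x0 + D) = - \<gamma> * x0 * exp (r * T) - \<gamma> * exp (r * T) * D"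
    by (simp add: algebra_simps)
  also have "\<gamma> * exp (r * T) * D = L / k"
    using scale[of L] unfolding D_def k_def .
  finally have D_exponent: "- \<gamma> * exp (r * T) * (x0 + D) = - \<gamma> * x0 * exp (r * T) - L / k" .
  have A_exponent: "- \<gamma> * exp (r * T) * A = ln E / k"
    using scale[of "ln E"] unfolding A_def k_def by simp
  have "res_expect M N T \<delta> \<eta> \<rho> s0 lam \<gamma> powr (1 / k) = exp ((- L + ln E) / k)"
    using assms(1,2) by (simp add: powr_def ln_mult)
  then show ?thesis
    unfolding value_fn_def k_def[symmetric] D_exponent A_exponent
    by (simp add: add_divide_distrib diff_divide_distrib flip: exp_add)
qed

theorem theorem3:
  fixes M :: "'w measure" and N :: "'w \<Rightarrow> real"
    and T r \<nu> \<mu> \<eta> \<sigma> \<rho> s0 lam \<gamma> x0 :: real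
  assumes "T > 0" "\<eta> > 0" "\<sigma> > 0" "-1 < \<rho>" "\<rho> < 1" "s0 > 0" "lam > 0" "\<gamma> > 0"
    and "prob_space M"
    and "distributed M lborel N std_normal_density"
  shows "let \<delta> = delta_par \<nu> \<eta> \<rho> \<mu> r \<sigma>;
             wb = lambert_W (s0 * exp ((\<delta> - \<eta>\<^sup>2 / 2) * T) * \<eta>\<^sup>2 * T * lam * \<gamma> * (1 - \<rho>\<^sup>2));
             D = exp (- r * T) / (\<gamma> * (1 - \<rho>\<^sup>2)) * (wb / (\<eta>\<^sup>2 * T) + wb\<^sup>2 / (2 * \<eta>\<^sup>2 * T));
             A = - exp (- r * T) / (\<gamma> * (1 - \<rho>\<^sup>2)) *
                   ln (\<integral>\<omega>. exp (- wb / (\<eta>\<^sup>2 * T) *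
                          (exp (\<eta> * sqrt T * N \<omega>) - 1 - \<eta> * sqrt T * N \<omega>)) \<partial>M);
             VD = - (1 / \<gamma>) * exp (- \<gamma> * exp (r * T) * (x0 + D) - (\<mu> - r)\<^sup>2 / (2 * \<sigma>\<^sup>2) * T);
             VA = exp (- \<gamma> * exp (r * T) * A)
         in reservation_price M N T r \<delta> \<eta> \<rho> s0 lam \<gamma> = D + A
            \<and> value_fn M N T r \<mu> \<sigma> \<delta> \<eta> \<rho> \<gamma> x0 s0 lam = VD * VA"
proof -
  interpret prob_space M by fact
  have [measurable]: "N \<in> borel_measurable M"
    using distributed_measurable[OF assms(10)] by simp
  define \<delta> where "\<delta> = delta_par \<nu> \<eta> \<rho> \<mu> r \<sigma>"
  define a where "a = \<eta> * sqrt T"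
  define c where "c = lam * \<gamma> * (1 - \<rho>\<^sup>2) * s0 * exp ((\<delta> - \<eta>\<^sup>2 / 2) * T)"
  define wb where
    "wb = lambert_W (s0 * exp ((\<delta> - \<eta>\<^sup>2 / 2) * T) * \<eta>\<^sup>2 * T * lam * \<gamma> * (1 - \<rho>\<^sup>2))"
  define E where "E = (\<integral>\<omega>. exp (- wb / (\<eta>\<^sup>2 * T) *
                          (exp (\<eta> * sqrt T * N \<omega>) - 1 - \<eta> * sqrt T * N \<omega>)) \<partial>M)"
  have "\<rho>\<^sup>2 < 1"
    using assms(4,5) by (simp add: abs_square_less_1)
  then have "0 < c" "a \<noteq> 0"
    using assms by (simp_all add: c_def a_def)
  have a2: "a\<^sup>2 = \<eta>\<^sup>2 * T"
    using \<open>T > 0\<close> by (simp add: a_def power_mult_distrib)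
  have wb_eq: "wb = lambert_W (c * a\<^sup>2)"
    by (simp add: wb_def c_def a2 mult_ac)
  have "res_expect M N T \<delta> \<eta> \<rho> s0 lam \<gamma> = (\<integral>\<omega>. exp (- c * exp (a * N \<omega>)) \<partial>M)"
    by (simp add: res_expect_def c_def a_def)
  also have "\<dots> = exp (- (wb / (\<eta>\<^sup>2 * T) + wb\<^sup>2 / (2 * \<eta>\<^sup>2 * T))) * E"
    using exp_neg_lognormal_integral_factor[OF assms(10) \<open>a \<noteq> 0\<close> \<open>0 < c\<close> wb_eq]
    unfolding a2 E_def by (simp add: a_def mult.assoc)
  finally have factor: "res_expect M N T \<delta> \<eta> \<rho> s0 lam \<gamma>
      = exp (- (wb / (\<eta>\<^sup>2 * T) + wb\<^sup>2 / (2 * \<eta>\<^sup>2 * T))) * E" .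
  have "0 < wb"
    using \<open>0 < c\<close> \<open>a \<noteq> 0\<close> by (simp add: wb_eq lambert_W_pos)
  then have "0 < E"
    using integral_exp_neg_convexity_gap_pos[of "wb / (\<eta>\<^sup>2 * T)" "\<lambda>\<omega>. \<eta> * sqrt T * N \<omega>"] assms(1,2)
    by (simp add: E_def)
  show ?thesis
    unfolding Let_def \<delta>_def[symmetric] unfolding wb_def[symmetric] unfolding E_def[symmetric]
    using reservation_price_factor[OF factor \<open>0 < E\<close>] value_fn_factor[OF factor \<open>0 < E\<close>] assms(8)
    by simp
qed

end
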